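(* Let $a\geq 3$ and $m\geq 2a^2-a+2$ be integers, and suppose $[C(m,a)]$ is colored with red and blue so that there is no monochromatic solution of $L(m,a)$ in $[C(m,a)]$, with both $a-2$ and $a-1$ red. Then $1$ is red.
   Context: For integers $m\geq 3$, $a\geq 1$, $L(m,a)$ denotes the equation $x_1+x_2+\cdots+x_{m-1}=a x_m$. For a positive integer $n$, $[n]=\{1,\dots,n\}$. A solution of $L(m,a)$ in $[n]$ is an $m$-tuple $(x_1,\dots,x_m)\in[n]^m$ (entries not necessarily distinct) satisfying the equation; given a 2-coloring of $[n]$, it is monochromatic if all $x_i$ have the same color. $C(m,a)$ denotes $\left\lceil \frac{m-1}{a}\left\lceil \frac{m-1}{a}\right\rceil\right\rceil$. *)

theory Defs
  imports Complex_Main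
begin

definition Cma :: "nat \<Rightarrow> nat \<Rightarrow> nat" where
  "Cma m a = nat \<lceil>(real (m - 1) / real a) * real_of_int \<lceil>real (m - 1) / real a\<rceil>\<rceil>"

definition is_solution :: "nat \<Rightarrow> nat \<Rightarrow> nat \<Rightarrow> (nat \<Rightarrow> nat) \<Rightarrow> bool" where
  "is_solution m a n x \<longleftrightarrow>
     (\<forall>i\<in>{1..m}. x i \<in> {1..n}) \<and> (\<Sum>i=1..m-1. x i) = a * x m"

(* a 2-colouring is a map col :: nat => bool (True = red, False = blue), only its values on [n] matter *)
definition monochromatic :: "(nat \<Rightarrow> bool) \<Rightarrow> nat \<Rightarrow> (nat \<Rightarrow> nat) \<Rightarrow> bool" where
  "monochromatic col m x \<longleftrightarrow> (\<forall>i\<in>{1..m}. \<forall>j\<in>{1..m}. col (x i) = col (x j))"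

definition no_mono_solution :: "nat \<Rightarrow> nat \<Rightarrow> nat \<Rightarrow> (nat \<Rightarrow> bool) \<Rightarrow> bool" where
  "no_mono_solution m a n col \<longleftrightarrow>
     \<not> (\<exists>x. is_solution m a n x \<and> monochromatic col m x)"

end

theory Submission
  imports Defs
begin

(* Proof idea (following the paper).  Write s = m - 1, b = a - 2, and suppose 1 is blue;
   note that s <= C(m,a), so entries up to s are allowed.

   (1) Window lemma: every v with s b <= a v <= s (b + 1) is blue.  Otherwise splitting a v
       into s nearly equal parts, all equal to b or b + 1 and hence red, and taking x_m = v
       gives a red solution.
   (2) The number k = s(b+1) div a lies in that window.  Put T = a k - (s - (b+1)), split T
       into b + 1 nearly equal parts q or q + 1 (q = T div (b+1)) and pad with s - (b+1)
       ones; with x_m = k this is a solution.  The bound m >= 2a^2 - a + 2 forces q and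
       q + 1 into the window, so the whole solution is blue -- a contradiction. *)

definition balanced :: "nat \<Rightarrow> nat \<Rightarrow> nat \<Rightarrow> nat" where
  "balanced c T i = T div c + (if i \<le> T mod c then 1 else 0)"

lemma sum_balanced:
  assumes "0 < c"
  shows "(\<Sum>i=1..c. balanced c T i) = T"
proof -
  have "(\<Sum>i=1..c. balanced c T i) = c * (T div c) + (\<Sum>i=1..c. if i \<le> T mod c then 1 else 0::nat)"
    by (simp add: balanced_def sum.distrib)
  also have "(\<Sum>i=1..c. if i \<le> T mod c then 1 else 0::nat) = card {i\<in>{1..c}. i \<le> T mod c}"
    by (simp add: sum.If_cases) (rule arg_cong[where f = card], auto)
  also have "{i\<in>{1..c}. i \<le> T mod c} = {1..T mod c}"
    using mod_less_divisor[OF assms, of T] by auto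
  finally show ?thesis by simp
qed

lemma balanced_range:
  assumes "0 < c" "c * u \<le> T" "T \<le> c * (u + 1)" "1 \<le> i"
  shows "balanced c T i = u \<or> balanced c T i = u + 1"
proof -
  have lower: "u \<le> T div c"
    using div_le_mono[OF assms(2), of c] assms(1) by simp
  have upper: "T div c \<le> u + 1"
    using div_le_mono[OF assms(3), of c] assms(1) by simp
  have "T div c = u \<or> T div c = u + 1"
    using lower upper by linarith
  moreover have "T mod c = 0" if "T div c = u + 1"
    using that assms(3) div_mult_mod_eq[of T c] by (simp add: algebra_simps)
  ultimately show ?thesis
    using assms(4) unfolding balanced_def by auto
qed

lemma no_mono_solutionD:
  assumes "no_mono_solution m a n col"
    and "\<forall>i\<in>{1..m}. x i \<in> {1..n}"
    and "(\<Sum>i=1..m-1. x i) = a * x m"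
    and "\<forall>i\<in>{1..m}. col (x i) = col (x m)"
  shows False
  using assms unfolding no_mono_solution_def is_solution_def monochromatic_def by metis

lemma padded_balanced_solution:
  assumes nomono: "no_mono_solution m a n col"
    and m: "m = Suc s" and c: "0 < c" "c \<le> s"
    and T: "c * q \<le> T" "T \<le> c * (q + 1)"
    and sum: "T + (s - c) * p = a * k"
    and range: "1 \<le> q" "q + 1 \<le> n" "1 \<le> p" "p \<le> n" "1 \<le> k" "k \<le> n"
    and colour: "col q = col k" "col (q + 1) = col k" "col p = col k"
  shows False
proof -
  define x where "x i = (if i = m then k else if i \<le> c then balanced c T i else p)" for i
  have entries: "x i = k \<or> x i = q \<or> x i = q + 1 \<or> x i = p" if "1 \<le> i" for i
    using that balanced_range[OF c(1) T] unfolding x_def by auto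
  have "\<forall>i\<in>{1..m}. x i \<in> {1..n}"
    using entries range by fastforce
  moreover have "\<forall>i\<in>{1..m}. col (x i) = col (x m)"
    using entries colour unfolding x_def by fastforce
  moreover have "(\<Sum>i=1..m-1. x i) = a * x m"
  proof -
    have "(\<Sum>i=1..m-1. x i) = (\<Sum>i=1..c. x i) + (\<Sum>i=c+1..s. x i)"
      using sum.ub_add_nat[of 1 c x "s - c"] c m by simp
    also have "(\<Sum>i=1..c. x i) = (\<Sum>i=1..c. balanced c T i)"
      using c m unfolding x_def by (intro sum.cong) auto
    also have "(\<Sum>i=c+1..s. x i) = (\<Sum>i=c+1..s. p)"
      using m unfolding x_def by (intro sum.cong) auto
    finally show ?thesis
      using sum sum_balanced[OF c(1)] m unfolding x_def by simp
  qed
  ultimately show False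
    using no_mono_solutionD[OF nomono] by blast
qed

(* v lies in the window of u when a v is between s u and s (u + 1), i.e. a v can be split
   into s parts each equal to u or u + 1. *)
definition window :: "nat \<Rightarrow> nat \<Rightarrow> nat \<Rightarrow> nat \<Rightarrow> bool" where
  "window s a u v \<longleftrightarrow> s * u \<le> a * v \<and> a * v \<le> s * (u + 1)"

lemma window_bounds:
  assumes "window s a u v" "1 \<le> u" "u < a" "1 \<le> s"
  shows "1 \<le> v" "v \<le> s"
proof -
  have "1 \<le> s * u" using assms(2,4) by simp
  then show "1 \<le> v"
    using assms(1) unfolding window_def by (cases v) auto
  have "a * v \<le> s * (u + 1)"
    using assms(1) unfolding window_def by simp
  also have "\<dots> \<le> s * a"
    using assms(3) by (intro mult_le_mono2) simp
  finally show "v \<le> s"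
    using assms(3) by simp
qed

(* If u and u + 1 are red, every v in the window of u is blue: split a v into s parts. *)
lemma window_blue:
  assumes nomono: "no_mono_solution m a n red"
    and m: "m = Suc s" and s: "a \<le> s" "s \<le> n"
    and u: "1 \<le> u" "u < a" and red: "red u" "red (u + 1)"
    and v: "window s a u v"
  shows "\<not> red v"
proof
  assume "red v"
  have "1 \<le> v" "v \<le> s"
    using window_bounds[OF v u] s u by auto
  then show False
    using padded_balanced_solution[OF nomono m, of s u "a * v" v v] v s u red \<open>red v\<close>
    unfolding window_def by (simp add: mult.commute)
qed

(* If a^2 <= m - 1 then m - 1 <= C(m,a), since C(m,a) >= ((m-1)/a)^2 >= m - 1. *)
lemma cma_ge:
  assumes "1 \<le> a" "a * a \<le> m - 1"
  shows "m - 1 \<le> Cma m a"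
proof -
  define t where "t = real (m - 1) / real a"
  have "real a * real a \<le> real (m - 1)"
    using assms(2) by (metis of_nat_le_iff of_nat_mult)
  then have "real a \<le> t"
    using assms(1) unfolding t_def by (simp add: field_simps)
  have "real (m - 1) = t * real a"
    using assms(1) unfolding t_def by simp
  also have "\<dots> \<le> t * t"
    using \<open>real a \<le> t\<close> by (intro mult_left_mono) auto
  also have "\<dots> \<le> t * real_of_int \<lceil>t\<rceil>"
    using \<open>real a \<le> t\<close> by (intro mult_left_mono le_of_int_ceiling) auto
  finally show ?thesis
    unfolding Cma_def t_def by linarith
qed

lemma window_witnesses:
  fixes b s :: nat
  assumes b: "1 \<le> b" and s: "2 * (b + 1) * (b + 2) \<le> s"
  obtains k T where "window s (b + 2) b k"
    and "T + (s - (b + 1)) = (b + 2) * k"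
    and "window s (b + 2) b (T div (b + 1))" "window s (b + 2) b (T div (b + 1) + 1)"
proof -
  define k where "k = s * (b + 1) div (b + 2)"
  define e where "e = s * (b + 1) mod (b + 2)"
  define T where "T = s * b + (b + 1 - e)"
  define q where "q = T div (b + 1)"
  have k: "(b + 2) * k + e = s * (b + 1)"
    unfolding k_def e_def by (rule div_mult_mod_eq[of _ "b + 2", unfolded mult.commute[of _ "b + 2"]])
  have e: "e \<le> b + 1"
    unfolding e_def using mod_less_divisor[of "b + 2" "s * (b + 1)"] by simp
  have "window s (b + 2) b k"
    using k e s unfolding window_def by (simp add: algebra_simps)
  moreover have "T + (s - (b + 1)) = (b + 2) * k"
    using k e s unfolding T_def by (simp add: algebra_simps)
  moreover have "window s (b + 2) b q" "window s (b + 2) b (q + 1)"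
  proof -
    have q_lower: "(b + 1) * q \<le> T"
      unfolding q_def by (rule times_div_less_eq_dividend)
    have q_upper: "T \<le> (b + 1) * q + b"
      unfolding q_def using dividend_less_times_div[of "b + 1" T] by (simp add: algebra_simps)
    have "b + 2 \<le> s"
      using s mult_le_mono1[of 1 "2 * (b + 1)" "b + 2"] by simp
    then have "(b + 2) * b \<le> s * b"
      by (rule mult_le_mono1)
    then have "(b + 1) * b \<le> (b + 1) * q"
      using q_upper unfolding T_def by (simp add: algebra_simps)
    then have "b \<le> q"
      using mult_le_cancel1[of "b + 1" b q] by simp
    then have "s * b \<le> (b + 2) * q"
      using q_upper unfolding T_def by (simp add: algebra_simps)
    moreover have "(b + 2) * (q + 1) \<le> s * (b + 1)"
    proof -
      have "(b + 1) * ((b + 2) * (q + 1)) = (b + 2) * ((b + 1) * q + (b + 1))"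
        by (simp add: algebra_simps)
      also have "\<dots> \<le> (b + 2) * (s * b + 2 * (b + 1))"
        using q_lower unfolding T_def by (intro mult_le_mono2) simp
      also have "\<dots> = (b + 2) * b * s + 2 * (b + 1) * (b + 2)"
        by (simp add: algebra_simps)
      also have "\<dots> \<le> (b + 1) * (s * (b + 1))"
        using s by (simp add: algebra_simps)
      finally show ?thesis
        by (subst (asm) mult_le_cancel1) simp
    qed
    ultimately show "window s (b + 2) b q" "window s (b + 2) b (q + 1)"
      unfolding window_def by (simp_all add: algebra_simps)
  qed
  ultimately show ?thesis
    using that unfolding q_def by blast
qed

theorem lemma5:
  fixes a m :: nat and red :: "nat \<Rightarrow> bool"
  assumes "a \<ge> 3"
    and "m \<ge> 2 * a^2 - a + 2"
    and "no_mono_solution m a (Cma m a) red"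
    and "red (a - 2)" and "red (a - 1)"
  shows "red 1"
proof (rule ccontr)
  assume blue_one: "\<not> red 1"
  define b where "b = a - 2"
  define s where "s = m - 1"
  have a: "a = b + 2" and b: "1 \<le> b"
    using assms(1) unfolding b_def by simp_all
  have "2 * (b + 1) * (b + 2) + (b + 2) \<le> 2 * a^2"
    unfolding a by (simp add: power2_eq_square algebra_simps)
  then have s: "2 * (b + 1) * (b + 2) \<le> s" and m: "m = Suc s"
    using assms(2) a unfolding s_def by linarith+
  have n: "s \<le> Cma m a"
    using cma_ge[of a m] s unfolding a s_def by (simp add: algebra_simps)
  have blue: "\<not> red v" if "window s a b v" for v
    using window_blue[OF assms(3) m _ n _ _ _ _ that] assms(4,5) b s unfolding a by simp
  have bounds: "1 \<le> v \<and> v \<le> s" if "window s a b v" for v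
    using window_bounds[OF that] b s unfolding a by simp
  obtain k T where k: "window s a b k" and sum: "T + (s - (b + 1)) = a * k"
    and q: "window s a b (T div (b + 1))" "window s a b (T div (b + 1) + 1)"
    using window_witnesses[OF b s, unfolded a[symmetric]] by blast
  have "(b + 1) * (T div (b + 1)) \<le> T"
    by (rule times_div_less_eq_dividend)
  moreover have "T \<le> (b + 1) * (T div (b + 1) + 1)"
    using dividend_less_times_div[of "b + 1" T] by (simp add: algebra_simps)
  ultimately show False
    using padded_balanced_solution[OF assms(3) m, of "b + 1" "T div (b + 1)" T 1 k]
      sum blue k q bounds[OF k] bounds[OF q(1)] bounds[OF q(2)] blue_one n s by simp
qed

end
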